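(* Let $\sigma(x)=\operatorname{sgn}(x)x^2$. Let $x_0,y_0$ be positive real numbers such that (i) $y_0$ is a rational number which is not a square in $\mathbb{Q}$; (ii) $x_0=a_0+b_0\sqrt{y_0}$ with $a_0\neq0$ and $|b_0|\geq1$ rational numbers; (iii) $y_0>x_0^2$. Then $(x_0,y_0)$ is $\sigma$-irrational. In particular $(-1+\sqrt2,2)$ is $\sigma$-irrational.
   Context: $h_\sigma(x,y)=(x+\sigma^{-1}(y),y)$, $v_\sigma(x,y)=(x,\sigma(x)+y)$. The $\sigma$-rational lines are the axes $Ox=\mathbb{R}\times\{0\}$, $Oy=\{0\}\times\mathbb{R}$, the sets $m(Ox)$ with $m$ in the monoid generated by $h_\sigma,v_\sigma$, and the sets $m(Oy)$ with $m$ in the monoid generated by $h_\sigma^{-1},v_\sigma^{-1}$; a point is $\sigma$-irrational if it lies on none of them. *)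

theory Defs
  imports Complex_Main
begin

type_synonym pt = "real \<times> real"

definition sgnsq :: "real \<Rightarrow> real" where
  "sgnsq x = sgn x * x ^ 2"

definition h_sigma :: "(real \<Rightarrow> real) \<Rightarrow> pt \<Rightarrow> pt" where
  "h_sigma \<sigma> = (\<lambda>(x, y). (x + inv \<sigma> y, y))"

definition v_sigma :: "(real \<Rightarrow> real) \<Rightarrow> pt \<Rightarrow> pt" where
  "v_sigma \<sigma> = (\<lambda>(x, y). (x, \<sigma> x + y))"

definition h_sigma_inv :: "(real \<Rightarrow> real) \<Rightarrow> pt \<Rightarrow> pt" where
  "h_sigma_inv \<sigma> = (\<lambda>(x, y). (x - inv \<sigma> y, y))"

definition v_sigma_inv :: "(real \<Rightarrow> real) \<Rightarrow> pt \<Rightarrow> pt" where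
  "v_sigma_inv \<sigma> = (\<lambda>(x, y). (x, y - \<sigma> x))"

inductive_set monoid_gen :: "('a \<Rightarrow> 'a) \<Rightarrow> ('a \<Rightarrow> 'a) \<Rightarrow> ('a \<Rightarrow> 'a) set"
  for f g :: "'a \<Rightarrow> 'a" where
  id_in: "id \<in> monoid_gen f g"
| f_step: "m \<in> monoid_gen f g \<Longrightarrow> f \<circ> m \<in> monoid_gen f g"
| g_step: "m \<in> monoid_gen f g \<Longrightarrow> g \<circ> m \<in> monoid_gen f g"

definition Ox :: "pt set" where "Ox = UNIV \<times> {0}"
definition Oy :: "pt set" where "Oy = {0} \<times> UNIV"

definition sigma_rational_lines :: "(real \<Rightarrow> real) \<Rightarrow> pt set set" where
  "sigma_rational_lines \<sigma> =
     {Ox, Oy}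
     \<union> {m ` Ox | m. m \<in> monoid_gen (h_sigma \<sigma>) (v_sigma \<sigma>)}
     \<union> {m ` Oy | m. m \<in> monoid_gen (h_sigma_inv \<sigma>) (v_sigma_inv \<sigma>)}"

definition sigma_irrational :: "(real \<Rightarrow> real) \<Rightarrow> pt \<Rightarrow> bool" where
  "sigma_irrational \<sigma> p \<longleftrightarrow> (\<forall>L \<in> sigma_rational_lines \<sigma>. p \<notin> L)"

end

theory Submission
  imports Defs "HOL-Computational_Algebra.Polynomial"
begin

text \<open>
  A point \<open>(x, y)\<close> on the image of \<open>Ox\<close> under a word in \<open>h\<^sub>\<sigma>, v\<^sub>\<sigma>\<close>
  satisfies \<open>y = r \<sigma>(x)\<close>, where the ratio \<open>r\<close> is obtained from \<open>0\<close> by the moves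
  \<open>r \<mapsto> r + 1\<close> (for \<open>v\<^sub>\<sigma>\<close>) and \<open>r \<mapsto> r / (1 + \<surd>r)\<^sup>2 < 1\<close> (for \<open>h\<^sub>\<sigma>\<close>). Every such
  ratio is totally nonnegative: it is a root of a nonzero rational polynomial whose complex
  roots are all nonnegative reals, a property preserved by both moves. Moreover a ratio
  \<open>r \<ge> 1\<close> can only come from the first move, so \<open>r - 1\<close> is a ratio as well.
  For \<open>(x\<^sub>0, y\<^sub>0)\<close> the number \<open>y\<^sub>0 / x\<^sub>0\<^sup>2 - 1\<close> lies in \<open>\<rat>(\<surd>y\<^sub>0)\<close> and its Galois
  conjugate \<open>y\<^sub>0 / (a\<^sub>0 - b\<^sub>0\<surd>y\<^sub>0)\<^sup>2 - 1\<close> is negative because \<open>|a\<^sub>0 - b\<^sub>0\<surd>y\<^sub>0| > \<surd>y\<^sub>0\<close>,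
  so it is not totally nonnegative. On the images of \<open>Oy\<close> under words in
  \<open>h\<^sub>\<sigma>\<inverse>, v\<^sub>\<sigma>\<inverse>\<close> the product \<open>x y\<close> stays \<open>\<le> 0\<close>.
\<close>

definition rat_coeffs :: "'a::field_char_0 poly \<Rightarrow> bool" where
  "rat_coeffs p \<longleftrightarrow> (\<forall>i. coeff p i \<in> \<rat>)"

lemma rat_coeffs_pCons_iff [simp]: "rat_coeffs (pCons c p) \<longleftrightarrow> c \<in> \<rat> \<and> rat_coeffs p"
  by (auto simp: rat_coeffs_def coeff_pCons split: nat.splits)

lemma rat_coeffs_0 [simp]: "rat_coeffs 0"
  by (simp add: rat_coeffs_def)

lemma rat_coeffs_1 [simp]: "rat_coeffs 1"
  by (simp add: rat_coeffs_def)

lemma rat_coeffs_add: "rat_coeffs p \<Longrightarrow> rat_coeffs q \<Longrightarrow> rat_coeffs (p + q)"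
  by (simp add: rat_coeffs_def)

lemma rat_coeffs_diff: "rat_coeffs p \<Longrightarrow> rat_coeffs q \<Longrightarrow> rat_coeffs (p - q)"
  by (simp add: rat_coeffs_def)

lemma rat_coeffs_mult: "rat_coeffs p \<Longrightarrow> rat_coeffs q \<Longrightarrow> rat_coeffs (p * q)"
  by (auto simp: rat_coeffs_def coeff_mult)

lemma rat_coeffs_power: "rat_coeffs p \<Longrightarrow> rat_coeffs (p ^ n)"
  by (induction n) (simp_all add: rat_coeffs_mult)

lemma rat_coeffs_pcompose: "rat_coeffs p \<Longrightarrow> rat_coeffs q \<Longrightarrow> rat_coeffs (pcompose p q)"
  by (induction p) (simp_all add: pcompose_pCons rat_coeffs_add rat_coeffs_mult)

lemma rat_coeffs_reflect_poly: "rat_coeffs p \<Longrightarrow> rat_coeffs (reflect_poly p)"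
  by (simp add: rat_coeffs_def coeff_reflect_poly)

lemma rat_coeffs_even_odd_decomp:
  assumes "rat_coeffs p"
  obtains e g where "rat_coeffs e" "rat_coeffs g" "\<And>z. poly p z = poly e (z\<^sup>2) + z * poly g (z\<^sup>2)"
proof -
  have "\<exists>e g. rat_coeffs e \<and> rat_coeffs g \<and> (\<forall>z. poly p z = poly e (z\<^sup>2) + z * poly g (z\<^sup>2))"
    using assms
  proof (induction p)
    case (pCons a p)
    then obtain e g where "rat_coeffs e" "rat_coeffs g" "\<forall>z. poly p z = poly e (z\<^sup>2) + z * poly g (z\<^sup>2)"
      by auto
    with pCons.prems show ?case
      by (intro exI[of _ "pCons a g"] exI[of _ e]) (auto simp: algebra_simps power2_eq_square)
  qed (intro exI[of _ 0], simp)
  with that show ?thesis by blast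
qed

lemma rat_coeffs_eval_conj:
  fixes p :: "complex poly" and a b s :: real
  assumes "rat_coeffs p" "a \<in> \<rat>" "b \<in> \<rat>" "s\<^sup>2 \<in> \<rat>"
  obtains u v where "u \<in> \<rat>" "v \<in> \<rat>"
    "poly p (of_real (a + b * s)) = of_real (u + v * s)"
    "poly p (of_real (a - b * s)) = of_real (u - v * s)"
proof -
  have "\<exists>u\<in>\<rat>. \<exists>v\<in>\<rat>. poly p (of_real (a + b * s)) = of_real (u + v * s) \<and>
                       poly p (of_real (a - b * s)) = of_real (u - v * s)"
    using assms(1)
  proof (induction p)
    case (pCons c p)
    then obtain u v where uv: "u \<in> \<rat>" "v \<in> \<rat>"
      "poly p (of_real (a + b * s)) = of_real (u + v * s)"
      "poly p (of_real (a - b * s)) = of_real (u - v * s)"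
      by auto
    from pCons.prems obtain q where "c = of_rat q"
      by (auto elim: Rats_cases)
    then have c: "c = of_real (of_rat q)"
      by (simp add: of_rat_def)
    have "poly (pCons c p) (of_real (a + b * s)) =
            of_real ((of_rat q + a * u + b * v * s\<^sup>2) + (a * v + b * u) * s)"
         "poly (pCons c p) (of_real (a - b * s)) =
            of_real ((of_rat q + a * u + b * v * s\<^sup>2) - (a * v + b * u) * s)"
      unfolding poly_pCons uv(3,4) c by (simp_all add: algebra_simps power2_eq_square)
    moreover have "of_rat q + a * u + b * v * s\<^sup>2 \<in> \<rat>" "a * v + b * u \<in> \<rat>"
      using uv(1,2) assms(2-4) by simp_all
    ultimately show ?case
      by blast
  qed (auto intro!: bexI[of _ 0])
  with that show ?thesis by blast
qed

section \<open>Algebraic numbers with all conjugates in a given set\<close>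

text \<open>
  The minimal polynomial of \<open>z\<close> divides \<open>p\<close>, so this says that \<open>z\<close> is algebraic with all
  its Galois conjugates in \<open>S\<close>. Not insisting on the minimal polynomial keeps the closure
  properties below elementary.
\<close>

definition conjugates_in :: "complex set \<Rightarrow> complex \<Rightarrow> bool" where
  "conjugates_in S z \<longleftrightarrow>
     (\<exists>p. p \<noteq> 0 \<and> rat_coeffs p \<and> poly p z = 0 \<and> {w. poly p w = 0} \<subseteq> S)"

lemma conjugates_in_mono: "conjugates_in S z \<Longrightarrow> S \<subseteq> T \<Longrightarrow> conjugates_in T z"
  unfolding conjugates_in_def by blast

lemma conjugates_in_rat: "c \<in> \<rat> \<Longrightarrow> conjugates_in {c} c"
  unfolding conjugates_in_def by (intro exI[of _ "[:-c, 1:]"]) auto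

lemma conjugates_in_affine:
  assumes "conjugates_in S z" "a \<in> \<rat>" "b \<in> \<rat>" "b \<noteq> 0"
  shows "conjugates_in ((\<lambda>w. a + b * w) ` S) (a + b * z)"
proof -
  obtain p where p: "p \<noteq> 0" "rat_coeffs p" "poly p z = 0" "{w. poly p w = 0} \<subseteq> S"
    using assms(1) unfolding conjugates_in_def by blast
  define q where "q = pcompose p [:- a / b, 1 / b:]"
  have poly_q: "poly q w = poly p ((w - a) / b)" for w
    by (simp add: q_def poly_pcompose diff_divide_distrib)
  have "q \<noteq> 0"
    using p(1) assms(4) by (simp add: q_def pcompose_eq_0_iff)
  moreover have "rat_coeffs q"
    using p(2) assms(2-4) by (simp add: q_def rat_coeffs_pcompose)
  moreover have "poly q (a + b * z) = 0"
    using p(3) assms(4) by (simp add: poly_q)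
  moreover have "w \<in> (\<lambda>w. a + b * w) ` S" if "poly q w = 0" for w
  proof
    show "w = a + b * ((w - a) / b)"
      using assms(4) by simp
    show "(w - a) / b \<in> S"
      using p(4) that by (auto simp: poly_q)
  qed
  ultimately show ?thesis
    unfolding conjugates_in_def by blast
qed

lemma conjugates_in_inverse:
  assumes "conjugates_in S z" "z \<noteq> 0"
  shows "conjugates_in (inverse ` S) (inverse z)"
proof -
  obtain p where p: "p \<noteq> 0" "rat_coeffs p" "poly p z = 0" "{w. poly p w = 0} \<subseteq> S"
    using assms(1) unfolding conjugates_in_def by blast
  have "reflect_poly p \<noteq> 0"
    using p(1) by simp
  moreover have "rat_coeffs (reflect_poly p)"
    using p(2) by (rule rat_coeffs_reflect_poly)
  moreover have "poly (reflect_poly p) (inverse z) = 0"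
    using p(3) assms(2) by (simp add: poly_reflect_poly_nz)
  moreover have "w \<in> inverse ` S" if "poly (reflect_poly p) w = 0" for w
  proof -
    have "w \<noteq> 0"
      using that p(1) by auto
    then have "inverse w \<in> S"
      using that p(4) by (auto simp: poly_reflect_poly_nz)
    then show ?thesis
      using \<open>w \<noteq> 0\<close> by (metis image_eqI inverse_inverse_eq)
  qed
  ultimately show ?thesis
    unfolding conjugates_in_def by blast
qed

lemma conjugates_in_sqrt:
  assumes "conjugates_in S z" "w\<^sup>2 = z"
  shows "conjugates_in {u. u\<^sup>2 \<in> S} w"
proof -
  obtain p where p: "p \<noteq> 0" "rat_coeffs p" "poly p z = 0" "{w. poly p w = 0} \<subseteq> S"
    using assms(1) unfolding conjugates_in_def by blast
  define q where "q = pcompose p [:0, 0, 1:]"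
  have poly_q: "poly q u = poly p (u\<^sup>2)" for u
    by (simp add: q_def poly_pcompose power2_eq_square)
  have "q \<noteq> 0"
    using p(1) by (simp add: q_def pcompose_eq_0_iff)
  moreover have "rat_coeffs q"
    using p(2) by (simp add: q_def rat_coeffs_pcompose)
  moreover have "poly q w = 0"
    using p(3) assms(2) by (simp add: poly_q)
  moreover have "{u. poly q u = 0} \<subseteq> {u. u\<^sup>2 \<in> S}"
    using p(4) by (auto simp: poly_q)
  ultimately show ?thesis
    unfolding conjugates_in_def by blast
qed

lemma conjugates_in_square:
  assumes "conjugates_in S z"
  shows "conjugates_in ((\<lambda>u. u\<^sup>2) ` S) (z\<^sup>2)"
proof -
  obtain p where p: "p \<noteq> 0" "rat_coeffs p" "poly p z = 0" "{w. poly p w = 0} \<subseteq> S"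
    using assms(1) unfolding conjugates_in_def by blast
  obtain e g where eg: "rat_coeffs e" "rat_coeffs g"
    "\<And>u. poly p u = poly e (u\<^sup>2) + u * poly g (u\<^sup>2)"
    using rat_coeffs_even_odd_decomp[OF p(2)] by blast
  \<comment> \<open>\<open>q(u\<^sup>2) = p(u) p(-u)\<close>, so the roots of \<open>q\<close> are the squares of the roots of \<open>p\<close>\<close>
  define q where "q = e\<^sup>2 - [:0, 1:] * g\<^sup>2"
  have poly_q: "poly q (u\<^sup>2) = poly p u * poly p (- u)" for u
    by (simp add: q_def eg(3) algebra_simps power2_eq_square)
  have "q \<noteq> 0"
  proof
    assume "q = 0"
    then have "poly (p * pcompose p [:0, -1:]) u = 0" for u
      using poly_q[of u] by (simp add: poly_pcompose)
    then have "p * pcompose p [:0, -1:] = 0"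
      using poly_all_0_iff_0 by blast
    with p(1) show False
      by (simp add: pcompose_eq_0_iff)
  qed
  moreover have "rat_coeffs q"
    using eg(1,2) by (simp add: q_def rat_coeffs_diff rat_coeffs_mult rat_coeffs_power)
  moreover have "poly q (z\<^sup>2) = 0"
    using p(3) by (simp add: poly_q)
  moreover have "c \<in> (\<lambda>u. u\<^sup>2) ` S" if "poly q c = 0" for c
  proof -
    have "poly p (csqrt c) = 0 \<or> poly p (- csqrt c) = 0"
      using that poly_q[of "csqrt c"] by simp
    then have "csqrt c \<in> S \<or> - csqrt c \<in> S"
      using p(4) by blast
    moreover have "c = (csqrt c)\<^sup>2" "c = (- csqrt c)\<^sup>2"
      by simp_all
    ultimately show ?thesis
      by blast
  qed
  ultimately show ?thesis
    unfolding conjugates_in_def by blast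
qed

lemma conjugates_in_conj:
  fixes a b s :: real
  assumes "conjugates_in S (of_real (a + b * s))"
    and "a \<in> \<rat>" "b \<in> \<rat>" "s\<^sup>2 \<in> \<rat>" "s \<notin> \<rat>"
  shows "of_real (a - b * s) \<in> S"
proof -
  obtain p where p: "rat_coeffs p" "poly p (of_real (a + b * s)) = 0" "{w. poly p w = 0} \<subseteq> S"
    using assms(1) unfolding conjugates_in_def by blast
  obtain u v where uv: "u \<in> \<rat>" "v \<in> \<rat>"
    "poly p (of_real (a + b * s)) = of_real (u + v * s)"
    "poly p (of_real (a - b * s)) = of_real (u - v * s)"
    using rat_coeffs_eval_conj p(1) assms(2-4) by blast
  have "u + v * s = 0"
    using uv(3) p(2) by (metis of_real_eq_0_iff)
  moreover have "v = 0"
  proof (rule ccontr)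
    assume "v \<noteq> 0"
    then have "s = - u / v"
      using \<open>u + v * s = 0\<close> by (simp add: field_simps)
    with uv(1,2) assms(5) show False
      by simp
  qed
  ultimately show ?thesis
    using uv(4) p(3) by auto
qed

abbreviation totally_nonneg :: "real \<Rightarrow> bool" where
  "totally_nonneg r \<equiv> conjugates_in {w \<in> \<real>. 0 \<le> Re w} (of_real r)"

lemma complex_in_Reals_if_square_nonneg:
  fixes u :: complex
  assumes "u\<^sup>2 \<in> \<real>" "0 \<le> Re (u\<^sup>2)"
  shows "u \<in> \<real>"
proof -
  have "Re u * Re u - Im u * Im u \<ge> 0" "Im u = 0 \<or> Re u = 0"
    using assms by (simp_all add: power2_eq_square complex_is_Real_iff)
  then have "Im u = 0"
    using not_real_square_gt_zero by fastforce
  then show ?thesis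
    by (simp add: complex_is_Real_iff)
qed

lemma squares_Reals_subset: "(\<lambda>u. u\<^sup>2) ` \<real> \<subseteq> {w \<in> \<real>. 0 \<le> Re w}"
  by (auto elim!: Reals_cases simp flip: of_real_power)

lemma totally_nonneg_shrink:
  assumes "totally_nonneg r" "0 \<le> r"
  shows "totally_nonneg (r / (1 + sqrt r)\<^sup>2)"
proof -
  \<comment> \<open>\<open>r / (1 + \<surd>r)\<^sup>2 = (1 - 1 / (1 + \<surd>r))\<^sup>2\<close>, and \<open>\<surd>r\<close> has only real conjugates\<close>
  define s where "s = sqrt r"
  have "0 \<le> s"
    using assms(2) by (simp add: s_def)
  have "conjugates_in {u. u\<^sup>2 \<in> {w \<in> \<real>. 0 \<le> Re w}} (of_real s)"
    using conjugates_in_sqrt[OF assms(1)] assms(2) by (simp add: s_def flip: of_real_power)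
  then have "conjugates_in \<real> (of_real s)"
    by (rule conjugates_in_mono) (auto intro: complex_in_Reals_if_square_nonneg)
  then have "conjugates_in \<real> (of_real (1 + s))"
    using conjugates_in_affine[of \<real> "of_real s" 1 1] by (auto elim!: conjugates_in_mono)
  moreover have "of_real (1 + s) \<noteq> (0::complex)"
    unfolding of_real_eq_0_iff using \<open>0 \<le> s\<close> by linarith
  ultimately have "conjugates_in \<real> (of_real (inverse (1 + s)))"
    using conjugates_in_inverse[of \<real> "of_real (1 + s)"] by (auto elim!: conjugates_in_mono)
  then have "conjugates_in \<real> (of_real (1 - inverse (1 + s)))"
    using conjugates_in_affine[of \<real> "of_real (inverse (1 + s))" 1 "-1"]
    by (auto elim!: conjugates_in_mono)
  then have "totally_nonneg ((1 - inverse (1 + s))\<^sup>2)"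
    using conjugates_in_square[of \<real> "of_real (1 - inverse (1 + s))"] squares_Reals_subset
    by (auto elim!: conjugates_in_mono)
  moreover have "(1 - inverse (1 + s))\<^sup>2 = r / (1 + sqrt r)\<^sup>2"
  proof -
    have "1 - inverse (1 + s) = s / (1 + s)"
      using \<open>0 \<le> s\<close> by (simp add: field_simps)
    then show ?thesis
      using assms(2) by (simp add: s_def power_divide)
  qed
  ultimately show ?thesis
    by simp
qed

lemma sgnsq_eq: "sgnsq x = x * \<bar>x\<bar>"
  by (simp add: sgnsq_def power2_eq_square sgn_real_def)

lemma sgnsq_scale: "0 \<le> c \<Longrightarrow> sgnsq (c * x) = c\<^sup>2 * sgnsq x"
  by (simp add: sgnsq_eq abs_mult power2_eq_square)

lemma mult_sgnsq_self_nonneg: "0 \<le> x * sgnsq x"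
  by (simp add: sgnsq_eq mult.assoc[symmetric])

lemma bij_sgnsq: "bij sgnsq"
proof (rule o_bij)
  show "(\<lambda>y. sgn y * sqrt \<bar>y\<bar>) \<circ> sgnsq = id"
    by (simp add: fun_eq_iff sgnsq_eq abs_mult sgn_mult sgn_mult_abs)
  show "sgnsq \<circ> (\<lambda>y. sgn y * sqrt \<bar>y\<bar>) = id"
    by (simp add: fun_eq_iff sgnsq_eq abs_mult mult.assoc sgn_mult_abs)
qed

lemma inv_sgnsq_sgnsq [simp]: "inv sgnsq (sgnsq x) = x"
  using bij_sgnsq by (simp add: bij_is_inj)

lemma sgnsq_inv_sgnsq [simp]: "sgnsq (inv sgnsq y) = y"
  using bij_sgnsq by (simp add: bij_is_surj surj_f_inv_f)

section \<open>The orbits of the axes\<close>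

lemma h_sigma_sgnsq_ratio:
  assumes "0 \<le> r"
  shows "h_sigma sgnsq (x, r * sgnsq x) =
           ((1 + sqrt r) * x, r / (1 + sqrt r)\<^sup>2 * sgnsq ((1 + sqrt r) * x))"
proof -
  have "r * sgnsq x = sgnsq (sqrt r * x)"
    using assms by (simp add: sgnsq_scale)
  moreover have "sgnsq ((1 + sqrt r) * x) = (1 + sqrt r)\<^sup>2 * sgnsq x"
    using assms by (simp add: sgnsq_scale)
  moreover have "0 < 1 + sqrt r"
    using real_sqrt_ge_zero[OF assms] by linarith
  ultimately show ?thesis
    by (simp add: h_sigma_def algebra_simps)
qed

lemma v_sigma_sgnsq_ratio: "v_sigma sgnsq (x, r * sgnsq x) = (x, (r + 1) * sgnsq x)"
  by (simp add: v_sigma_def algebra_simps)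

text \<open>
  The ratios \<open>y / \<sigma> x\<close> of the points on the images of \<open>Ox\<close>; by the two lemmas above,
  \<open>v\<^sub>\<sigma>\<close> and \<open>h\<^sub>\<sigma>\<close> act on them by the rules \<open>v_step\<close> and \<open>h_step\<close>.
\<close>

inductive_set Ox_ratios :: "real set" where
  zero: "0 \<in> Ox_ratios"
| v_step: "r \<in> Ox_ratios \<Longrightarrow> r + 1 \<in> Ox_ratios"
| h_step: "r \<in> Ox_ratios \<Longrightarrow> r / (1 + sqrt r)\<^sup>2 \<in> Ox_ratios"

lemma Ox_ratios_nonneg: "r \<in> Ox_ratios \<Longrightarrow> 0 \<le> r"
  by (induction rule: Ox_ratios.induct) auto

lemma shrink_less_1:
  assumes "0 \<le> r"
  shows "r / (1 + sqrt r)\<^sup>2 < 1"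
proof -
  have "r = (sqrt r)\<^sup>2"
    using assms by simp
  also have "\<dots> < (1 + sqrt r)\<^sup>2"
    using assms by (intro power_strict_mono) auto
  finally show ?thesis
    by (simp add: divide_less_eq)
qed

lemma Ox_ratios_minus_1:
  assumes "r \<in> Ox_ratios" "1 \<le> r"
  shows "r - 1 \<in> Ox_ratios"
  using assms(1)
proof cases
  case (h_step r')
  then have "r < 1"
    using shrink_less_1 Ox_ratios_nonneg by blast
  with assms(2) show ?thesis
    by simp
qed (use assms(2) in auto)

lemma Ox_ratios_totally_nonneg: "r \<in> Ox_ratios \<Longrightarrow> totally_nonneg r"
proof (induction rule: Ox_ratios.induct)
  case zero
  then show ?case
    using conjugates_in_rat[of 0] by (auto elim!: conjugates_in_mono)
next
  case (v_step r)
  have "conjugates_in ((\<lambda>w. 1 + 1 * w) ` {w \<in> \<real>. 0 \<le> Re w}) (1 + 1 * of_real r)"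
    by (rule conjugates_in_affine[OF v_step.IH]) simp_all
  then show ?case
    by (auto simp: add.commute elim!: conjugates_in_mono)
next
  case (h_step r)
  then show ?case
    using Ox_ratios_nonneg by (blast intro: totally_nonneg_shrink)
qed

lemma Ox_orbit_ratio:
  assumes "m \<in> monoid_gen (h_sigma sgnsq) (v_sigma sgnsq)"
  shows "\<exists>r \<in> Ox_ratios. snd (m (t, 0)) = r * sgnsq (fst (m (t, 0)))"
  using assms
proof induction
  case id_in
  show ?case
    using Ox_ratios.zero by auto
next
  case (f_step m)
  then obtain x r where "r \<in> Ox_ratios" "m (t, 0) = (x, r * sgnsq x)"
    by (metis prod.collapse)
  then show ?case
    using Ox_ratios_nonneg by (auto simp: h_sigma_sgnsq_ratio intro!: bexI[OF _ Ox_ratios.h_step])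
next
  case (g_step m)
  then obtain x r where "r \<in> Ox_ratios" "m (t, 0) = (x, r * sgnsq x)"
    by (metis prod.collapse)
  then show ?case
    by (auto simp: v_sigma_sgnsq_ratio intro!: bexI[OF _ Ox_ratios.v_step])
qed

lemma Oy_orbit_opposite_signs:
  assumes "m \<in> monoid_gen (h_sigma_inv sgnsq) (v_sigma_inv sgnsq)"
  shows "fst (m (0, t)) * snd (m (0, t)) \<le> 0"
  using assms
proof induction
  case (f_step m)
  obtain x y where "m (0, t) = (x, y)"
    by fastforce
  moreover have "0 \<le> inv sgnsq y * y"
    using mult_sgnsq_self_nonneg[of "inv sgnsq y"] by simp
  ultimately show ?case
    using f_step.IH by (simp add: h_sigma_inv_def algebra_simps)
next
  case (g_step m)
  obtain x y where "m (0, t) = (x, y)"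
    by fastforce
  then show ?case
    using g_step.IH mult_sgnsq_self_nonneg[of x] by (simp add: v_sigma_inv_def algebra_simps)
qed simp

lemma Ox_orbit_totally_nonneg:
  assumes "m \<in> monoid_gen (h_sigma sgnsq) (v_sigma sgnsq)" "(x, y) \<in> m ` Ox" "0 < x" "x\<^sup>2 < y"
  shows "totally_nonneg (y / x\<^sup>2 - 1)"
proof -
  obtain t where "m (t, 0) = (x, y)"
    using assms(2) by (auto simp: Ox_def)
  then obtain r where "r \<in> Ox_ratios" "y = r * x\<^sup>2"
    using Ox_orbit_ratio[OF assms(1), of t] assms(3) by (auto simp: sgnsq_def)
  then have "y / x\<^sup>2 - 1 \<in> Ox_ratios"
    using assms(3,4) by (intro Ox_ratios_minus_1) simp_all
  then show ?thesis
    by (rule Ox_ratios_totally_nonneg)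
qed

lemma Oy_orbit_nonpos:
  assumes "m \<in> monoid_gen (h_sigma_inv sgnsq) (v_sigma_inv sgnsq)" "(x, y) \<in> m ` Oy" "0 < x"
  shows "y \<le> 0"
proof -
  obtain t where "m (0, t) = (x, y)"
    using assms(2) by (auto simp: Oy_def)
  then have "x * y \<le> 0"
    using Oy_orbit_opposite_signs[OF assms(1), of t] by simp
  with assms(3) show ?thesis
    by (simp add: mult_le_0_iff)
qed

lemma sigma_irrational_sgnsqI:
  assumes "0 < x" "x\<^sup>2 < y" "\<not> totally_nonneg (y / x\<^sup>2 - 1)"
  shows "sigma_irrational sgnsq (x, y)"
proof -
  have "0 < y"
    using assms(2) by (metis le_less_trans zero_le_power2)
  then show ?thesis
    using assms Ox_orbit_totally_nonneg Oy_orbit_nonpos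
    unfolding sigma_irrational_def sigma_rational_lines_def
    by (fastforce simp: Ox_def Oy_def)
qed

section \<open>The points \<open>(a + b\<surd>y, y)\<close>\<close>

lemma square_less_conj_square:
  fixes a b s x :: real
  assumes "0 < x" "x < s" "x = a + b * s" "1 \<le> \<bar>b\<bar>"
  shows "s\<^sup>2 < (a - b * s)\<^sup>2"
proof -
  have "s \<le> \<bar>b\<bar> * s"
    using assms by simp
  then have "s < \<bar>a - b * s\<bar>"
    using assms(1-3) by (cases "0 \<le> b") linarith+
  then have "s\<^sup>2 < \<bar>a - b * s\<bar>\<^sup>2"
    using assms(1,2) by (intro power_strict_mono) auto
  then show ?thesis
    by simp
qed

lemma quadratic_ratio_not_totally_nonneg:
  fixes x y a b :: real
  assumes "0 < x" "0 < y" "y \<in> \<rat>" "sqrt y \<notin> \<rat>" "a \<in> \<rat>" "b \<in> \<rat>" "1 \<le> \<bar>b\<bar>"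
    and "x = a + b * sqrt y" "x\<^sup>2 < y"
  shows "\<not> totally_nonneg (y / x\<^sup>2 - 1)"
proof
  \<comment> \<open>transport \<open>y / x\<^sup>2 - 1\<close> back to \<open>x = a + b\<surd>y\<close>, whose conjugates \<open>u\<close> satisfy \<open>u\<^sup>2 \<le> y\<close>\<close>
  assume "totally_nonneg (y / x\<^sup>2 - 1)"
  then have "conjugates_in {w \<in> \<real>. 1 \<le> Re w} (of_real (y / x\<^sup>2))"
    using conjugates_in_affine[of "{w \<in> \<real>. 0 \<le> Re w}" "of_real (y / x\<^sup>2 - 1)" 1 1]
    by (auto elim!: conjugates_in_mono)
  then have "conjugates_in {w \<in> \<real>. 0 \<le> Re w \<and> Re w \<le> 1} (of_real (x\<^sup>2 / y))"
    using conjugates_in_inverse[of "{w \<in> \<real>. 1 \<le> Re w}" "of_real (y / x\<^sup>2)"] assms(1,2)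
    by (auto elim!: conjugates_in_mono Reals_cases simp: inverse_le_1_iff simp flip: of_real_inverse)
  then have "conjugates_in {w \<in> \<real>. Re w \<le> y} (of_real (x\<^sup>2))"
    using conjugates_in_affine[of "{w \<in> \<real>. 0 \<le> Re w \<and> Re w \<le> 1}" "of_real (x\<^sup>2 / y)" 0 y]
      assms(2,3)
    by (auto elim!: conjugates_in_mono Reals_cases)
  then have "conjugates_in {u. u\<^sup>2 \<in> {w \<in> \<real>. Re w \<le> y}} (of_real x)"
    by (rule conjugates_in_sqrt) simp
  then have "conjugates_in {u. u\<^sup>2 \<in> {w \<in> \<real>. Re w \<le> y}} (of_real (a + b * sqrt y))"
    by (simp only: assms(8))
  then have "of_real (a - b * sqrt y) \<in> {u. u\<^sup>2 \<in> {w \<in> \<real>. Re w \<le> y}}"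
    using assms(2-6) by (intro conjugates_in_conj) simp_all
  then have "(a - b * sqrt y)\<^sup>2 \<le> (sqrt y)\<^sup>2"
    using assms(2) by (simp flip: of_real_power)
  moreover have "(sqrt y)\<^sup>2 < (a - b * sqrt y)\<^sup>2"
    using assms(1,7-9) by (intro square_less_conj_square[of x]) (simp_all add: real_less_rsqrt)
  ultimately show False
    by simp
qed

lemma sigma_irrational_sgnsq_quadratic:
  fixes x y a b :: real
  assumes "0 < x" "0 < y" "y \<in> \<rat>" "sqrt y \<notin> \<rat>" "a \<in> \<rat>" "b \<in> \<rat>" "1 \<le> \<bar>b\<bar>"
    and "x = a + b * sqrt y" "x\<^sup>2 < y"
  shows "sigma_irrational sgnsq (x, y)"
  using assms by (intro sigma_irrational_sgnsqI quadratic_ratio_not_totally_nonneg)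

lemma square_if_sqrt_of_nat_Rats:
  assumes "sqrt (real k) \<in> \<rat>"
  obtains m where "k = m\<^sup>2"
proof -
  obtain m n :: nat where mn: "n \<noteq> 0" "\<bar>sqrt (real k)\<bar> = real m / real n" "coprime m n"
    using Rats_abs_nat_div_natE[OF assms] by blast
  then have "real k = (real m / real n)\<^sup>2"
    by (metis abs_of_nonneg of_nat_0_le_iff real_sqrt_ge_zero real_sqrt_pow2)
  then have "real (k * n\<^sup>2) = real (m\<^sup>2)"
    using mn(1) by (simp add: field_simps)
  then have "k * n\<^sup>2 = m\<^sup>2"
    by (simp only: of_nat_eq_iff)
  then have "n\<^sup>2 dvd m\<^sup>2"
    by (metis dvd_triv_right)
  moreover have "coprime (n\<^sup>2) (m\<^sup>2)"
    using mn(3) by (simp add: coprime_commute)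
  ultimately have "n\<^sup>2 = 1"
    using coprime_common_divisor[of "n\<^sup>2" "m\<^sup>2" "n\<^sup>2"] by simp
  with \<open>k * n\<^sup>2 = m\<^sup>2\<close> show ?thesis
    using that by simp
qed

lemma sqrt_2_not_Rats: "sqrt 2 \<notin> \<rat>"
proof
  assume "sqrt 2 \<in> \<rat>"
  then obtain m :: nat where "2 = m\<^sup>2"
    using square_if_sqrt_of_nat_Rats[of 2] by auto
  moreover have "m\<^sup>2 \<le> 1 \<or> 4 \<le> m\<^sup>2"
    using power_mono[of m 1 2] power_mono[of 2 m 2] by (cases "m \<le> 1") auto
  ultimately show False
    by auto
qed

theorem lemma7:
  fixes x0 y0 a0 b0 :: real
  assumes "x0 > 0" and "y0 > 0"
    and "y0 \<in> \<rat>" and "\<not> (\<exists>q \<in> \<rat>. y0 = q ^ 2)"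
    and "a0 \<in> \<rat>" and "b0 \<in> \<rat>" and "a0 \<noteq> 0" and "\<bar>b0\<bar> \<ge> 1"
    and "x0 = a0 + b0 * sqrt y0"
    and "y0 > x0 ^ 2"
  shows "sigma_irrational sgnsq (x0, y0) \<and> sigma_irrational sgnsq (-1 + sqrt 2, 2)"
proof
  have "sqrt y0 \<notin> \<rat>"
    using assms(2,4) real_sqrt_pow2[of y0] by force
  then show "sigma_irrational sgnsq (x0, y0)"
    using assms by (intro sigma_irrational_sgnsq_quadratic[of _ _ a0 b0]) simp_all
  have "1 < sqrt (2::real)"
    by simp
  moreover have "(-1 + sqrt 2)\<^sup>2 = 3 - 2 * sqrt (2::real)"
    by (simp add: power2_eq_square algebra_simps)
  ultimately have "0 < -1 + sqrt (2::real)" "(-1 + sqrt 2)\<^sup>2 < (2::real)"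
    by linarith+
  then show "sigma_irrational sgnsq (-1 + sqrt 2, 2)"
    using sqrt_2_not_Rats by (intro sigma_irrational_sgnsq_quadratic[of _ _ "-1" 1]) simp_all
qed

end
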